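(* Let $\phi:\mathbb{R}_+\to\mathbb{R}_+$ be a non-negative continuous function and $d\nu(r)=\phi(r)\,dr$ the corresponding Borel measure on $\mathbb{R}_+$. Let $I$ be a non-negative function on $\mathbb{R}_+$ such that: (i) for some constant $C>0$ and all $a,b\ge0$, $C\,I(ab)\le bI(a)+aI(b)$; (ii) $I$ is a concave lower isoperimetric function for $\nu$. Then for every non-negative continuously differentiable function $f$ on $\mathbb{R}_+$ with bounded support, $$C\,I\Big(\int_{\mathbb{R}_+}f\,d\nu\Big)\le\int_{\mathbb{R}_+}I(f)\,d\nu+\int_{\mathbb{R}_+}|f'|\,d\nu.$$
   Context: $\mathbb{R}_+=[0,\infty)$ with the metric $|x-y|$. For a Borel set $A\subset\mathbb{R}_+$, $\nu^+(A)=\liminf_{r\to0^+}\frac{\nu(A^r)-\nu(A)}{r}$, where $A^r=\{x\in\mathbb{R}_+:\operatorname{dist}(x,A)<r\}$. A function $J$ is a lower isoperimetric function for $\nu$ if $\nu^+(A)\ge J(\nu(A))$ for every Borel set $A\subset\mathbb{R}_+$. *)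

theory Defs
  imports "HOL-Analysis.Analysis" "HOL-Probability.Probability"
begin

definition nu_measure :: "(real \<Rightarrow> real) \<Rightarrow> real measure" where
  "nu_measure \<phi> = density (restrict_space lborel {0..}) (\<lambda>x. ennreal (\<phi> x))"

definition r_nbhd :: "real set \<Rightarrow> real \<Rightarrow> real set" where
  "r_nbhd A r = {x. 0 \<le> x \<and> (\<exists>a\<in>A. \<bar>x - a\<bar> < r)}"

definition boundary_measure :: "real measure \<Rightarrow> real set \<Rightarrow> ereal" where
  "boundary_measure M A =
     Liminf (at_right (0::real))
       (\<lambda>r. (enn2ereal (emeasure M (r_nbhd A r)) - enn2ereal (emeasure M A)) / ereal r)"

text \<open>J is a lower isoperimetric function for M: nu^+(A) \<ge> J(nu(A)) for every Borel A \<subseteq> R_+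
  (of finite measure, so that J(nu(A)) is defined).\<close>
definition lower_isoperimetric :: "real measure \<Rightarrow> (real \<Rightarrow> real) \<Rightarrow> bool" where
  "lower_isoperimetric M J \<longleftrightarrow>
     (\<forall>A\<in>sets M. emeasure M A < \<infinity> \<longrightarrow>
        boundary_measure M A \<ge> ereal (J (enn2real (emeasure M A))))"

end

theory Submission
  imports Defs
begin

text \<open>
  Put \<open>u = \<integral> f d\<nu>\<close> and \<open>m(t) = \<nu>{f > t}\<close>, so that \<open>u = \<integral>\<^sub>0\<^sup>\<infinity> m(t) dt\<close> (layer cake).
  Hypothesis (i) with \<open>a = u/m(t)\<close>, \<open>b = m(t)\<close> splits the integrand level by level:
  \<open>C I(u) m(t)/u \<le> m(t) \<cdot> (m(t)/u) I(u/m(t)) + I(m(t))\<close>.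
  After integration in \<open>t\<close>, the first term is at most \<open>\<integral> I(f) d\<nu>\<close>: by Tonelli it equals
  \<open>\<integral> G(f(x)) d\<nu>(x)\<close> with \<open>G(y) = \<integral>\<^sub>0\<^sup>y (m/u) I(u/m) dt\<close>, and bounding \<open>I\<close> by its supporting
  line at \<open>y\<close> gives \<open>G(y) \<le> I(y)\<close>. The second term is at most \<open>\<integral> |f'| d\<nu>\<close> by a coarea
  argument: \<open>I(m(t)) \<le> \<nu>\<^sup>+{f > t}\<close>, passing from \<open>{f > t}\<close> to its \<open>r\<close>-neighbourhood only adds
  points with \<open>f(x) \<le> t < f(x) + r (|f'(x)| + \<epsilon>)\<close>, and Fatou's lemma with Tonelli gives
  \<open>\<integral> \<nu>\<^sup>+{f > t} dt \<le> \<integral> (|f'| + \<epsilon>) d\<nu>\<close>.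
\<close>

lemma Liminf_filter_antimono:
  fixes f :: "'a \<Rightarrow> 'b::complete_lattice"
  assumes "F \<le> G"
  shows "Liminf G f \<le> Liminf F f"
  unfolding Liminf_def by (rule SUP_subset_mono) (auto intro: filter_leD[OF assms])

lemma open_Rats_right:
  fixes S :: "real set"
  assumes "open S" "y \<in> S"
  obtains q where "q \<in> \<rat>" "y < q" "q \<in> S"
proof -
  obtain e where "0 < e" "ball y e \<subseteq> S" using assms openE by blast
  moreover obtain q where "q \<in> \<rat>" "y < q" "q < y + e" using Rats_dense_in_real[of y "y + e"] \<open>0 < e\<close> by auto
  moreover have "q \<in> ball y e" using \<open>y < q\<close> \<open>q < y + e\<close> by (simp add: dist_real_def)
  ultimately show ?thesis using that by blast
qed

lemma continuous_on_max0_compose: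
  assumes "continuous_on {0..} g"
  shows "continuous_on UNIV (\<lambda>x::real. g (max 0 x))"
proof -
  have "continuous_on UNIV (\<lambda>x::real. max 0 x)" by (intro continuous_intros)
  thus ?thesis by (rule continuous_on_compose2[OF assms]) auto
qed

lemma mvt_half_line:
  fixes f f' :: "real \<Rightarrow> real"
  assumes "\<And>x. 0 \<le> x \<Longrightarrow> (f has_real_derivative f' x) (at x within {0..})" "0 \<le> x" "0 \<le> y"
  obtains z where "min x y \<le> z" "z \<le> max x y" "f y - f x = f' z * (y - x)"
proof -
  have mvt: "\<exists>z\<in>{a..b}. f b - f a = f' z * (b - a)" if "0 \<le> a" "a \<le> b" for a b
  proof -
    have "(f has_derivative (\<lambda>h. f' z * h)) (at z within {a..b})" if "a \<le> z" "z \<le> b" for z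
      using assms(1)[of z] \<open>0 \<le> a\<close> that unfolding has_field_derivative_def
      by (auto intro: has_derivative_subset)
    from mvt_very_simple[OF \<open>a \<le> b\<close> this] show ?thesis by simp
  qed
  show ?thesis
  proof (cases "x \<le> y")
    case True thus ?thesis using mvt[OF assms(2) True] that by auto
  next
    case False
    then obtain z where "z \<in> {y..x}" "f x - f y = f' z * (x - y)" using mvt[OF assms(3), of x] by auto
    thus ?thesis using that[of z] False by (auto simp: algebra_simps)
  qed
qed

lemma C1_increment_bound:
  fixes f f' :: "real \<Rightarrow> real"
  assumes f_deriv: "\<And>x. 0 \<le> x \<Longrightarrow> (f has_real_derivative f' x) (at x within {0..})"
    and f'_cont: "continuous_on {0..} f'" and "0 < e"
  obtains d where "0 < d" "d \<le> 1"
    "\<And>x y. 0 \<le> x \<Longrightarrow> x \<le> T \<Longrightarrow> 0 \<le> y \<Longrightarrow> \<bar>y - x\<bar> < d \<Longrightarrow> f y - f x \<le> \<bar>y - x\<bar> * (\<bar>f' x\<bar> + e)"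
proof -
  have "uniformly_continuous_on {0..T+1} f'"
    by (rule compact_uniformly_continuous[OF continuous_on_subset[OF f'_cont]]) auto
  then obtain d0 where "0 < d0"
    and d0: "\<And>x z. x \<in> {0..T+1} \<Longrightarrow> z \<in> {0..T+1} \<Longrightarrow> dist z x < d0 \<Longrightarrow> dist (f' z) (f' x) < e"
    using uniformly_continuous_onE[OF _ \<open>0 < e\<close>] by metis
  show ?thesis
  proof (rule that[of "min d0 1"])
    fix x y assume xy: "0 \<le> x" "x \<le> T" "0 \<le> y" "\<bar>y - x\<bar> < min d0 1"
    then obtain z where z: "min x y \<le> z" "z \<le> max x y" "f y - f x = f' z * (y - x)"
      using mvt_half_line[OF f_deriv] by metis
    have "z \<in> {0..T+1}" "\<bar>z - x\<bar> < d0" using xy z by auto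
    hence "\<bar>f' z\<bar> \<le> \<bar>f' x\<bar> + e" using d0[of x z] xy by (auto simp: dist_real_def)
    have "f' z * (y - x) \<le> \<bar>f' z\<bar> * \<bar>y - x\<bar>" by (metis abs_ge_self abs_mult)
    also have "\<dots> \<le> (\<bar>f' x\<bar> + e) * \<bar>y - x\<bar>" by (rule mult_right_mono) (fact, simp)
    finally show "f y - f x \<le> \<bar>y - x\<bar> * (\<bar>f' x\<bar> + e)" by (simp add: z(3) mult.commute)
  qed (use \<open>0 < d0\<close> in auto)
qed

lemma Liminf_at_right_le_liminf_inverse:
  fixes g :: "real \<Rightarrow> 'a::complete_lattice"
  shows "Liminf (at_right 0) g \<le> liminf (\<lambda>n. g (inverse (real (Suc n))))"
proof -
  have "filterlim (\<lambda>n. inverse (real (Suc n))) (at_right 0) sequentially"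
    unfolding filterlim_at using LIMSEQ_inverse_real_of_nat by (auto intro: always_eventually)
  hence "Liminf (at_right 0) g \<le> Liminf (filtermap (\<lambda>n. inverse (real (Suc n))) sequentially) g"
    by (intro Liminf_filter_antimono) (simp add: filterlim_def)
  also have "\<dots> \<le> liminf (\<lambda>n. g (inverse (real (Suc n))))"
    by (rule Liminf_filtermap_le)
  finally show ?thesis .
qed

subsection \<open>Concave functions on the half-line\<close>

lemma concave_on_slope_le:
  fixes I :: "real \<Rightarrow> real"
  assumes "concave_on S I" "w \<in> S" "v \<in> S" "w < y" "y < v"
  shows "(I v - I y) / (v - y) \<le> (I y - I w) / (y - w)"
proof -
  have "convex_on S (\<lambda>x. - I x)" using assms(1) by (simp add: concave_on_def)
  from convex_on_slope_le[OF this assms(2,3) assms(4,5)]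
  have "((- I w) - (- I y)) / (w - y) \<le> ((- I y) - (- I v)) / (y - v)" by linarith
  moreover have "((- I w) - (- I y)) / (w - y) = - ((I y - I w) / (y - w))"
    by (metis minus_diff_eq divide_minus_right minus_diff_minus)
  moreover have "((- I y) - (- I v)) / (y - v) = - ((I v - I y) / (v - y))"
    by (metis minus_diff_eq divide_minus_right minus_diff_minus)
  ultimately show ?thesis by linarith
qed

lemma concave_nonneg_support_line:
  fixes I :: "real \<Rightarrow> real"
  assumes conc: "concave_on {0..} I" and nonneg: "\<And>x. 0 \<le> x \<Longrightarrow> 0 \<le> I x" and "0 < y"
  obtains k where "0 \<le> k" "\<And>w. 0 \<le> w \<Longrightarrow> I w \<le> I y + k * (w - y)"
proof -
  define k where "k = (INF w\<in>{0..<y}. (I y - I w) / (y - w))"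
  have right_le_left: "(I v - I y) / (v - y) \<le> (I y - I w) / (y - w)" if "0 \<le> w" "w < y" "y < v" for v w
    using concave_on_slope_le[OF conc, of w v y] that by auto
  have bdd: "bdd_below ((\<lambda>w. (I y - I w) / (y - w)) ` {0..<y})"
    using right_le_left[of _ "y + 1"] by (intro bdd_belowI2) auto
  have left: "I w \<le> I y + k * (w - y)" if "0 \<le> w" "w < y" for w
  proof -
    have "k \<le> (I y - I w) / (y - w)" unfolding k_def using that by (intro cINF_lower[OF bdd]) auto
    thus ?thesis using that by (simp add: le_divide_eq algebra_simps)
  qed
  have right: "I v \<le> I y + k * (v - y)" if "y < v" for v
  proof -
    have "(I v - I y) / (v - y) \<le> k" unfolding k_def
      using \<open>0 < y\<close> right_le_left that by (intro cINF_greatest) auto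
    thus ?thesis using that by (simp add: divide_le_eq algebra_simps)
  qed
  have support: "I w \<le> I y + k * (w - y)" if "0 \<le> w" for w
    using left right that by (cases "w < y"; cases "w = y") auto
  have "0 \<le> k"
  proof (rule ccontr)
    assume "\<not> 0 \<le> k"
    \<comment> \<open>a line of negative slope through \<open>(y, I y)\<close> becomes negative, but bounds \<open>I \<ge> 0\<close> from above\<close>
    define v where "v = y + I y / (- k) + 1"
    have "0 \<le> I y / (- k)" using nonneg[of y] \<open>0 < y\<close> \<open>\<not> 0 \<le> k\<close> by (intro divide_nonneg_pos) auto
    hence "0 \<le> v" "k * (v - y) = - I y + k" using \<open>0 < y\<close> \<open>\<not> 0 \<le> k\<close> by (auto simp: v_def algebra_simps)
    thus False using support[of v] nonneg[of v] \<open>\<not> 0 \<le> k\<close> by linarith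
  qed
  thus ?thesis using support that by blast
qed

lemma concave_nonneg_mono:
  fixes I :: "real \<Rightarrow> real"
  assumes "concave_on {0..} I" "\<And>x. 0 \<le> x \<Longrightarrow> 0 \<le> I x" "0 \<le> w" "w \<le> y"
  shows "I w \<le> I y"
proof (cases "w = y")
  case False
  hence "0 < y" using assms(3,4) by simp
  obtain k where "0 \<le> k" and support: "\<And>v. 0 \<le> v \<Longrightarrow> I v \<le> I y + k * (v - y)"
    using concave_nonneg_support_line[OF assms(1,2) \<open>0 < y\<close>] by blast
  have "k * (w - y) \<le> 0" using \<open>0 \<le> k\<close> assms(4) by (simp add: mult_nonneg_nonpos)
  thus ?thesis using support[OF assms(3)] by linarith
qed simp

lemma concave_nonneg_borel_measurable:
  fixes I :: "real \<Rightarrow> real"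
  assumes "concave_on {0..} I" "\<And>x. 0 \<le> x \<Longrightarrow> 0 \<le> I x"
  shows "(\<lambda>x. I (max 0 x)) \<in> borel_measurable borel"
  by (rule borel_measurable_mono) (auto simp: mono_def intro!: concave_nonneg_mono[OF assms])

subsection \<open>The measure \<open>\<nu>\<close>\<close>

locale half_line_density =
  fixes \<phi> :: "real \<Rightarrow> real"
  assumes phi_cont: "continuous_on {0..} \<phi>"
begin

abbreviation \<nu> :: "real measure" where "\<nu> \<equiv> nu_measure \<phi>"

text \<open>Extending the density by 0 to all of \<open>\<real>\<close> lets Tonelli's theorem work on \<open>lborel \<Otimes>\<^sub>M lborel\<close>.\<close>
definition weight :: "real \<Rightarrow> ennreal" where
  "weight x = ennreal (\<phi> (max 0 x)) * indicator {0..} x"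

lemma borel_measurable_phi_max0 [measurable]: "(\<lambda>x. \<phi> (max 0 x)) \<in> borel_measurable borel"
  by (rule borel_measurable_continuous_onI[OF continuous_on_max0_compose[OF phi_cont]])

lemma borel_measurable_weight [measurable]: "weight \<in> borel_measurable borel"
  unfolding weight_def by measurable

lemma space_nu: "space \<nu> = {0..}"
  by (simp add: nu_measure_def)

lemma sets_nu_iff: "A \<in> sets \<nu> \<longleftrightarrow> A \<in> sets borel \<and> A \<subseteq> {0..}"
  by (auto simp: nu_measure_def sets_restrict_space intro!: image_eqI[where x=A])

lemma measurable_nuI:
  assumes "g \<in> borel_measurable borel" "\<And>x. 0 \<le> x \<Longrightarrow> h x = g x"
  shows "h \<in> borel_measurable \<nu>"
proof -
  have "g \<in> borel_measurable (restrict_space lborel {0..})"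
    by (rule measurable_restrict_space1) (use assms(1) in simp)
  hence "g \<in> borel_measurable \<nu>" by (simp add: nu_measure_def)
  thus ?thesis by (rule measurable_cong[THEN iffD1, rotated]) (auto simp: space_nu assms(2))
qed

lemma nn_integral_nu:
  assumes [measurable]: "g \<in> borel_measurable borel"
  shows "(\<integral>\<^sup>+x. g x \<partial>\<nu>) = (\<integral>\<^sup>+x. weight x * g x \<partial>lborel)"
proof -
  have "(\<lambda>x. ennreal (\<phi> (max 0 x))) \<in> borel_measurable (restrict_space lborel {0..})"
    by (rule measurable_restrict_space1) measurable
  hence "(\<lambda>x. ennreal (\<phi> x)) \<in> borel_measurable (restrict_space lborel {0..})"
    by (rule measurable_cong[THEN iffD1, rotated]) (auto simp: space_restrict_space)
  moreover have "g \<in> borel_measurable (restrict_space lborel {0..})"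
    by (rule measurable_restrict_space1) measurable
  ultimately have "(\<integral>\<^sup>+x. g x \<partial>\<nu>) = (\<integral>\<^sup>+x. ennreal (\<phi> x) * g x \<partial>restrict_space lborel {0..})"
    unfolding nu_measure_def by (rule nn_integral_density)
  also have "\<dots> = (\<integral>\<^sup>+x. ennreal (\<phi> x) * g x * indicator {0..} x \<partial>lborel)"
    by (rule nn_integral_restrict_space) simp
  also have "\<dots> = (\<integral>\<^sup>+x. weight x * g x \<partial>lborel)"
    by (rule nn_integral_cong) (simp add: weight_def indicator_def)
  finally show ?thesis .
qed

lemma emeasure_nu:
  assumes "A \<in> sets \<nu>"
  shows "emeasure \<nu> A = (\<integral>\<^sup>+x. weight x * indicator A x \<partial>lborel)"
proof -
  have [measurable]: "A \<in> sets borel" using assms by (simp add: sets_nu_iff)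
  have "emeasure \<nu> A = (\<integral>\<^sup>+x. indicator A x \<partial>\<nu>)" using assms by simp
  also have "\<dots> = (\<integral>\<^sup>+x. weight x * indicator A x \<partial>lborel)" by (rule nn_integral_nu) measurable
  finally show ?thesis .
qed

lemma emeasure_nu_bounded_finite:
  assumes "A \<in> sets \<nu>" "A \<subseteq> {0..T}"
  shows "emeasure \<nu> A < \<infinity>"
proof -
  have "continuous_on {0..T} \<phi>" by (rule continuous_on_subset[OF phi_cont]) auto
  then obtain B where B: "\<And>x. x \<in> {0..T} \<Longrightarrow> norm (\<phi> x) \<le> B"
    using continuous_on_compact_bound[OF compact_Icc] by blast
  have Icc: "{0..T} \<in> sets \<nu>" by (simp add: sets_nu_iff)
  have "emeasure \<nu> A \<le> emeasure \<nu> {0..T}" by (rule emeasure_mono[OF assms(2) Icc])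
  also have "\<dots> = (\<integral>\<^sup>+x. weight x * indicator {0..T} x \<partial>lborel)"
    by (rule emeasure_nu[OF Icc])
  also have "\<dots> \<le> (\<integral>\<^sup>+x. ennreal B * indicator {0..T} x \<partial>lborel)"
  proof (rule nn_integral_mono)
    fix x
    show "weight x * indicator {0..T} x \<le> ennreal B * indicator {0..T} x"
      using B[of x] by (cases "x \<in> {0..T}") (auto simp: weight_def intro!: ennreal_leI dest: abs_le_D1)
  qed
  also have "\<dots> = ennreal B * emeasure lborel {0..T}"
    by (simp add: nn_integral_cmult_indicator)
  also have "\<dots> < \<infinity>" by (cases "0 \<le> T") (simp_all add: ennreal_mult_less_top)
  finally show ?thesis .
qed

lemma nn_integral_emeasure_family:
  assumes [measurable]: "Measurable.pred (borel \<Otimes>\<^sub>M borel) (\<lambda>p. fst p \<in> S (snd p))"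
    and S: "\<And>t. S t \<in> sets \<nu>" and [measurable]: "g \<in> borel_measurable borel"
  shows "(\<integral>\<^sup>+t. g t * emeasure \<nu> (S t) \<partial>lborel)
       = (\<integral>\<^sup>+x. weight x * (\<integral>\<^sup>+t. g t * indicator (S t) x \<partial>lborel) \<partial>lborel)"
proof -
  have [measurable]: "S t \<in> sets borel" for t using S by (simp add: sets_nu_iff)
  have "(\<integral>\<^sup>+t. g t * emeasure \<nu> (S t) \<partial>lborel)
      = (\<integral>\<^sup>+t. \<integral>\<^sup>+x. g t * (weight x * indicator (S t) x) \<partial>lborel \<partial>lborel)"
    unfolding emeasure_nu[OF S] by (intro nn_integral_cong nn_integral_cmult[symmetric]) measurable
  also have "\<dots> = (\<integral>\<^sup>+x. \<integral>\<^sup>+t. g t * (weight x * indicator (S t) x) \<partial>lborel \<partial>lborel)"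
    by (rule lborel_pair.Fubini') measurable
  also have "\<dots> = (\<integral>\<^sup>+x. weight x * (\<integral>\<^sup>+t. g t * indicator (S t) x \<partial>lborel) \<partial>lborel)"
  proof (rule nn_integral_cong)
    fix x
    have [measurable]: "Measurable.pred borel (\<lambda>t. x \<in> S t)"
      using measurable_Pair2[OF assms(1), of x] by simp
    have "(\<integral>\<^sup>+t. g t * (weight x * indicator (S t) x) \<partial>lborel)
        = (\<integral>\<^sup>+t. weight x * (g t * indicator (S t) x) \<partial>lborel)"
      by (simp add: mult.left_commute)
    also have "\<dots> = weight x * (\<integral>\<^sup>+t. g t * indicator (S t) x \<partial>lborel)"
      by (rule nn_integral_cmult) measurable
    finally show "(\<integral>\<^sup>+t. g t * (weight x * indicator (S t) x) \<partial>lborel)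
        = weight x * (\<integral>\<^sup>+t. g t * indicator (S t) x \<partial>lborel)" .
  qed
  finally show ?thesis .
qed

lemma sets_r_nbhd: "r_nbhd A r \<in> sets \<nu>"
proof -
  have "r_nbhd A r = {0..} \<inter> (\<Union>a\<in>A. ball a r)"
    by (auto simp: r_nbhd_def dist_real_def abs_minus_commute)
  thus ?thesis by (simp add: sets_nu_iff borel_open open_UN)
qed

lemma boundary_difference_quotient:
  assumes A: "A \<in> sets \<nu>" "emeasure \<nu> A < \<infinity>" and "0 < r"
  shows "(enn2ereal (emeasure \<nu> (r_nbhd A r)) - enn2ereal (emeasure \<nu> A)) / ereal r
       = enn2ereal (emeasure \<nu> (r_nbhd A r - A) * ennreal (1 / r))"
proof -
  have "A \<subseteq> r_nbhd A r"
  proof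
    fix x assume "x \<in> A"
    moreover have "0 \<le> x" using \<open>x \<in> A\<close> A(1) by (auto simp: sets_nu_iff)
    ultimately show "x \<in> r_nbhd A r" using \<open>0 < r\<close> unfolding r_nbhd_def by force
  qed
  hence "A \<union> (r_nbhd A r - A) = r_nbhd A r" by blast
  moreover have "emeasure \<nu> A + emeasure \<nu> (r_nbhd A r - A) = emeasure \<nu> (A \<union> (r_nbhd A r - A))"
    by (rule plus_emeasure) (use A(1) sets_r_nbhd in auto)
  ultimately have split: "emeasure \<nu> (r_nbhd A r) = emeasure \<nu> A + emeasure \<nu> (r_nbhd A r - A)" by simp
  obtain a where a: "emeasure \<nu> A = ennreal a" "0 \<le> a" using A(2) by (cases "emeasure \<nu> A") auto
  define Y where "Y = enn2ereal (emeasure \<nu> (r_nbhd A r - A))"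
  have "0 \<le> Y" unfolding Y_def by simp
  have "(enn2ereal (emeasure \<nu> (r_nbhd A r)) - enn2ereal (emeasure \<nu> A)) / ereal r
      = ((ereal a + Y) - ereal a) / ereal r"
    unfolding split a(1) Y_def using a(2) by (simp add: plus_ennreal.rep_eq)
  also have "\<dots> = Y * ereal (1 / r)"
    using \<open>0 \<le> Y\<close> \<open>0 < r\<close> by (cases Y) (auto simp: divide_ereal_def divide_inverse)
  also have "\<dots> = enn2ereal (emeasure \<nu> (r_nbhd A r - A) * ennreal (1 / r))"
    unfolding Y_def using \<open>0 < r\<close> by (simp add: times_ennreal.rep_eq)
  finally show ?thesis .
qed

end

locale half_line_profile = half_line_density +
  fixes f f' :: "real \<Rightarrow> real" and R :: real
  assumes f_nonneg: "\<And>x. 0 \<le> x \<Longrightarrow> 0 \<le> f x"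
    and f_deriv: "\<And>x. 0 \<le> x \<Longrightarrow> (f has_real_derivative f' x) (at x within {0..})"
    and f'_cont: "continuous_on {0..} f'"
    and f_supp: "\<And>x. R \<le> x \<Longrightarrow> f x = 0"
begin

lemma f_cont: "continuous_on {0..} f"
  unfolding continuous_on_eq_continuous_within
  using f_deriv has_derivative_continuous[of f] unfolding has_field_derivative_def
  by (metis atLeast_iff continuous_within_subset subset_refl)

definition F :: "real \<Rightarrow> real" where "F x = f (max 0 x)"
definition F' :: "real \<Rightarrow> real" where "F' x = f' (max 0 x)"

lemma continuous_F: "continuous_on UNIV F"
  unfolding F_def by (rule continuous_on_max0_compose[OF f_cont])

lemma borel_measurable_F [measurable]: "F \<in> borel_measurable borel"
  by (rule borel_measurable_continuous_onI[OF continuous_F])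

lemma borel_measurable_F' [measurable]: "F' \<in> borel_measurable borel"
  unfolding F'_def by (rule borel_measurable_continuous_onI[OF continuous_on_max0_compose[OF f'_cont]])

subsection \<open>Layer-cake representation\<close>

definition superlevel :: "real \<Rightarrow> real set" where
  "superlevel t = {x. 0 \<le> x \<and> t < f x}"

definition level_measure :: "real \<Rightarrow> real" where
  "level_measure t = measure \<nu> (superlevel t)"

lemma superlevel_eq: "superlevel t = {0..} \<inter> {x. t < F x}"
  unfolding superlevel_def F_def by auto

lemma sets_superlevel: "superlevel t \<in> sets \<nu>"
  unfolding superlevel_eq sets_nu_iff by auto

lemma pred_superlevel [measurable]:
  "Measurable.pred (borel \<Otimes>\<^sub>M borel) (\<lambda>p. fst p \<in> superlevel (snd p))"
  "Measurable.pred (borel \<Otimes>\<^sub>M borel) (\<lambda>p. snd p \<in> superlevel (fst p))"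
  unfolding superlevel_eq by simp_all

lemma superlevel_subset:
  assumes "0 \<le> t"
  shows "superlevel t \<subseteq> {0..R}"
proof
  fix x assume x: "x \<in> superlevel t"
  hence "\<not> R \<le> x" using f_supp[of x] assms by (auto simp: superlevel_def)
  thus "x \<in> {0..R}" using x by (auto simp: superlevel_def)
qed

lemma emeasure_superlevel: "0 \<le> t \<Longrightarrow> emeasure \<nu> (superlevel t) = ennreal (level_measure t)"
  unfolding level_measure_def
  using emeasure_nu_bounded_finite[OF sets_superlevel superlevel_subset]
  by (simp add: emeasure_eq_ennreal_measure less_top)

lemma level_measure_nonneg: "0 \<le> level_measure t"
  unfolding level_measure_def by simp

lemma borel_measurable_level_measure [measurable]: "level_measure \<in> borel_measurable borel"
proof -
  have "(\<lambda>t. enn2real (\<integral>\<^sup>+x. weight x * indicator (superlevel t) x \<partial>lborel)) \<in> borel_measurable borel"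
    by measurable
  thus ?thesis
    by (rule measurable_cong[THEN iffD1, rotated]) (simp add: level_measure_def measure_def emeasure_nu[OF sets_superlevel])
qed

lemma weighted_layer_cake:
  assumes [measurable]: "g \<in> borel_measurable borel"
  shows "(\<integral>\<^sup>+x. (\<integral>\<^sup>+t. g t * indicator {0..<f x} t \<partial>lborel) \<partial>\<nu>)
       = (\<integral>\<^sup>+t. g t * indicator {0..} t * emeasure \<nu> (superlevel t) \<partial>lborel)"
proof -
  have [measurable]: "Measurable.pred (borel \<Otimes>\<^sub>M borel) (\<lambda>p. snd p \<in> {0..<F (fst p)})"
    unfolding atLeastLessThan_iff by measurable
  have "(\<integral>\<^sup>+x. (\<integral>\<^sup>+t. g t * indicator {0..<f x} t \<partial>lborel) \<partial>\<nu>)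
      = (\<integral>\<^sup>+x. (\<integral>\<^sup>+t. g t * indicator {0..<F x} t \<partial>lborel) \<partial>\<nu>)"
    by (rule nn_integral_cong) (simp add: space_nu F_def)
  also have "\<dots> = (\<integral>\<^sup>+x. weight x * (\<integral>\<^sup>+t. g t * indicator {0..<F x} t \<partial>lborel) \<partial>lborel)"
    by (rule nn_integral_nu) measurable
  also have "\<dots> = (\<integral>\<^sup>+x. weight x * (\<integral>\<^sup>+t. g t * indicator {0..} t * indicator (superlevel t) x \<partial>lborel) \<partial>lborel)"
  proof (rule nn_integral_cong)
    fix x
    show "weight x * (\<integral>\<^sup>+t. g t * indicator {0..<F x} t \<partial>lborel)
        = weight x * (\<integral>\<^sup>+t. g t * indicator {0..} t * indicator (superlevel t) x \<partial>lborel)"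
    proof (cases "0 \<le> x")
      case True
      thus ?thesis
        by (intro arg_cong[where f="(*) (weight x)"] nn_integral_cong) (auto simp: superlevel_eq split: split_indicator)
    qed (simp add: weight_def)
  qed
  also have "\<dots> = (\<integral>\<^sup>+t. g t * indicator {0..} t * emeasure \<nu> (superlevel t) \<partial>lborel)"
    by (rule nn_integral_emeasure_family[symmetric]) (simp_all add: sets_superlevel)
  finally show ?thesis .
qed

lemma nn_integral_layer_cake:
  "(\<integral>\<^sup>+x. ennreal (f x) \<partial>\<nu>) = (\<integral>\<^sup>+t. ennreal (level_measure t) * indicator {0..} t \<partial>lborel)"
proof -
  have "(\<integral>\<^sup>+x. ennreal (f x) \<partial>\<nu>) = (\<integral>\<^sup>+x. (\<integral>\<^sup>+t. 1 * indicator {0..<f x} t \<partial>lborel) \<partial>\<nu>)"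
    by (rule nn_integral_cong) (simp add: space_nu f_nonneg)
  also have "\<dots> = (\<integral>\<^sup>+t. 1 * indicator {0..} t * emeasure \<nu> (superlevel t) \<partial>lborel)"
    by (rule weighted_layer_cake) simp
  also have "\<dots> = (\<integral>\<^sup>+t. ennreal (level_measure t) * indicator {0..} t \<partial>lborel)"
    by (rule nn_integral_cong) (auto simp: indicator_def emeasure_superlevel)
  finally show ?thesis .
qed

lemma nn_integral_f_finite: "(\<integral>\<^sup>+x. ennreal (f x) \<partial>\<nu>) < \<infinity>"
proof -
  have "continuous_on {0..R} f" by (rule continuous_on_subset[OF f_cont]) auto
  then obtain B where B: "\<And>x. x \<in> {0..R} \<Longrightarrow> norm (f x) \<le> B"
    using continuous_on_compact_bound[OF compact_Icc] by blast
  have "(\<integral>\<^sup>+x. ennreal (f x) \<partial>\<nu>) \<le> (\<integral>\<^sup>+x. ennreal B * indicator {0..R} x \<partial>\<nu>)"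
  proof (rule nn_integral_mono)
    fix x assume "x \<in> space \<nu>"
    thus "ennreal (f x) \<le> ennreal B * indicator {0..R} x"
      using B[of x] f_supp[of x] by (cases "x \<le> R") (auto simp: space_nu intro!: ennreal_leI)
  qed
  also have "\<dots> = ennreal B * emeasure \<nu> {0..R}"
    by (rule nn_integral_cmult_indicator) (simp add: sets_nu_iff)
  also have "\<dots> < \<infinity>"
    using emeasure_nu_bounded_finite[of "{0..R}" R] by (simp add: sets_nu_iff ennreal_mult_less_top)
  finally show ?thesis .
qed

definition mass :: real where "mass = integral\<^sup>L \<nu> f"

lemma mass_nonneg: "0 \<le> mass"
  unfolding mass_def by (rule integral_nonneg_AE) (auto simp: space_nu f_nonneg intro!: AE_I2)

lemma mass_layer_cake: "ennreal mass = (\<integral>\<^sup>+t. ennreal (level_measure t) * indicator {0..} t \<partial>lborel)"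
proof -
  have [measurable]: "f \<in> borel_measurable \<nu>"
    by (rule measurable_nuI[OF borel_measurable_F]) (simp add: F_def)
  have "integrable \<nu> f"
    using nn_integral_f_finite by (intro integrableI_nonneg) (auto simp: space_nu f_nonneg intro!: AE_I2)
  hence "(\<integral>\<^sup>+x. ennreal (f x) \<partial>\<nu>) = ennreal mass"
    unfolding mass_def by (rule nn_integral_eq_integral) (auto simp: space_nu f_nonneg intro!: AE_I2)
  thus ?thesis using nn_integral_layer_cake by simp
qed

subsection \<open>The coarea inequality\<close>

definition boundary_shell :: "real \<Rightarrow> real \<Rightarrow> real set" where
  "boundary_shell r t = r_nbhd (superlevel t) r - superlevel t"

definition shell_quotient :: "real \<Rightarrow> real \<Rightarrow> ennreal" where
  "shell_quotient r t = emeasure \<nu> (boundary_shell r t) * ennreal (1 / r)"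

lemma sets_boundary_shell: "boundary_shell r t \<in> sets \<nu>"
  unfolding boundary_shell_def using sets_r_nbhd sets_superlevel by blast

text \<open>Rational centres suffice, which makes the shells jointly measurable in \<open>(x, t)\<close>.\<close>
lemma boundary_shell_iff_rational:
  assumes "0 < r"
  shows "x \<in> boundary_shell r t \<longleftrightarrow> 0 \<le> x \<and> F x \<le> t \<and> (\<exists>q\<in>\<rat>. 0 \<le> q \<and> t < F q \<and> \<bar>x - q\<bar> < r)"
proof -
  have "\<exists>q\<in>\<rat>. 0 \<le> q \<and> t < F q \<and> \<bar>x - q\<bar> < r" if y: "0 \<le> y" "t < F y" "\<bar>x - y\<bar> < r" for y
  proof -
    have "open ({z. t < F z} \<inter> ball x r)"
      by (intro open_Int open_ball open_Collect_less continuous_on_const continuous_F)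
    moreover have "y \<in> {z. t < F z} \<inter> ball x r" using y by (simp add: dist_real_def)
    ultimately obtain q where "q \<in> \<rat>" "y < q" "q \<in> {z. t < F z} \<inter> ball x r"
      by (rule open_Rats_right)
    thus ?thesis using y(1) by (intro bexI[of _ q]) (auto simp: dist_real_def)
  qed
  thus ?thesis
    by (auto simp: boundary_shell_def r_nbhd_def superlevel_def F_def)
qed

lemma pred_boundary_shell:
  assumes "0 < r"
  shows "Measurable.pred (borel \<Otimes>\<^sub>M borel) (\<lambda>p. fst p \<in> boundary_shell r (snd p))"
    and "Measurable.pred (borel \<Otimes>\<^sub>M borel) (\<lambda>p. snd p \<in> boundary_shell r (fst p))"
proof -
  have "Measurable.pred (borel \<Otimes>\<^sub>M borel)
          (\<lambda>p. 0 \<le> fst p \<and> F (fst p) \<le> snd p \<and> (\<exists>q\<in>\<rat>. 0 \<le> q \<and> snd p < F q \<and> \<bar>fst p - q\<bar> < r))"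
    "Measurable.pred (borel \<Otimes>\<^sub>M borel)
          (\<lambda>p. 0 \<le> snd p \<and> F (snd p) \<le> fst p \<and> (\<exists>q\<in>\<rat>. 0 \<le> q \<and> fst p < F q \<and> \<bar>snd p - q\<bar> < r))"
    using countable_rat by (measurable, measurable)
  thus "Measurable.pred (borel \<Otimes>\<^sub>M borel) (\<lambda>p. fst p \<in> boundary_shell r (snd p))"
    "Measurable.pred (borel \<Otimes>\<^sub>M borel) (\<lambda>p. snd p \<in> boundary_shell r (fst p))"
    by (simp_all add: boundary_shell_iff_rational[OF assms])
qed

lemma borel_measurable_shell_quotient:
  assumes "0 < r"
  shows "shell_quotient r \<in> borel_measurable borel"
proof -
  note pred_boundary_shell(2)[OF assms, measurable]
  have "(\<lambda>t. (\<integral>\<^sup>+x. weight x * indicator (boundary_shell r t) x \<partial>lborel) * ennreal (1 / r))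
      \<in> borel_measurable borel"
    by measurable
  thus ?thesis
    by (rule measurable_cong[THEN iffD1, rotated]) (simp add: shell_quotient_def emeasure_nu[OF sets_boundary_shell])
qed

lemma isoperimetric_le_liminf_shell_quotient:
  assumes iso: "lower_isoperimetric \<nu> J" and "0 \<le> t"
  shows "ennreal (J (level_measure t)) \<le> liminf (\<lambda>n. shell_quotient (inverse (real (Suc n))) t)"
proof -
  have fin: "emeasure \<nu> (superlevel t) < \<infinity>" using \<open>0 \<le> t\<close> by (simp add: emeasure_superlevel)
  have "ereal (J (level_measure t)) \<le> boundary_measure \<nu> (superlevel t)"
    using iso sets_superlevel fin unfolding lower_isoperimetric_def level_measure_def measure_def by blast
  also have "\<dots> \<le> liminf (\<lambda>n. (enn2ereal (emeasure \<nu> (r_nbhd (superlevel t) (inverse (real (Suc n)))))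
                             - enn2ereal (emeasure \<nu> (superlevel t))) / ereal (inverse (real (Suc n))))"
    unfolding boundary_measure_def by (rule Liminf_at_right_le_liminf_inverse)
  also have "\<dots> = liminf (\<lambda>n. enn2ereal (shell_quotient (inverse (real (Suc n))) t))"
    by (intro arg_cong[where f=liminf] ext)
       (simp add: boundary_difference_quotient[OF sets_superlevel fin] shell_quotient_def boundary_shell_def)
  finally have "ereal (J (level_measure t)) \<le> liminf (\<lambda>n. enn2ereal (shell_quotient (inverse (real (Suc n))) t))" .
  hence "e2ennreal (ereal (J (level_measure t)))
      \<le> e2ennreal (liminf (\<lambda>n. enn2ereal (shell_quotient (inverse (real (Suc n))) t)))"
    by (rule e2ennreal_mono)
  also have "\<dots> = liminf (\<lambda>n. e2ennreal (enn2ereal (shell_quotient (inverse (real (Suc n))) t)))"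
    by (rule Liminf_compose_continuous_mono[symmetric])
       (auto simp: continuous_on_e2ennreal mono_def e2ennreal_mono)
  finally show ?thesis by simp
qed

lemma boundary_shell_section:
  assumes incr: "\<And>x y. 0 \<le> x \<Longrightarrow> x \<le> R + 1 \<Longrightarrow> 0 \<le> y \<Longrightarrow> \<bar>y - x\<bar> < d
                    \<Longrightarrow> f y - f x \<le> \<bar>y - x\<bar> * (\<bar>f' x\<bar> + e)"
    and "0 \<le> e" "0 < r" "r \<le> d" "d \<le> 1" "0 \<le> t" "x \<in> boundary_shell r t"
  shows "x \<le> R + 1" "F x \<le> t" "t < F x + r * (\<bar>F' x\<bar> + e)"
proof -
  obtain y where y: "y \<in> superlevel t" "\<bar>x - y\<bar> < r" "0 \<le> x" "\<not> t < f x"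
    using \<open>x \<in> boundary_shell r t\<close> unfolding boundary_shell_def r_nbhd_def superlevel_def by auto
  have "0 \<le> y" "y \<le> R" using superlevel_subset[OF \<open>0 \<le> t\<close>] y(1) by auto
  thus x_le: "x \<le> R + 1" using y(2) \<open>r \<le> d\<close> \<open>d \<le> 1\<close> by auto
  show "F x \<le> t" using y(3,4) by (simp add: F_def)
  have "f y - f x \<le> \<bar>y - x\<bar> * (\<bar>f' x\<bar> + e)"
    using incr[OF y(3) x_le \<open>0 \<le> y\<close>] y(2) \<open>r \<le> d\<close> by (simp add: abs_minus_commute)
  also have "\<dots> \<le> r * (\<bar>f' x\<bar> + e)"
    using y(2) \<open>0 \<le> e\<close> by (intro mult_right_mono) (auto simp: abs_minus_commute)
  finally show "t < F x + r * (\<bar>F' x\<bar> + e)"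
    using y(1,3) by (simp add: superlevel_def F_def F'_def)
qed

lemma nn_integral_shell_section_le:
  assumes incr: "\<And>x y. 0 \<le> x \<Longrightarrow> x \<le> R + 1 \<Longrightarrow> 0 \<le> y \<Longrightarrow> \<bar>y - x\<bar> < d
                    \<Longrightarrow> f y - f x \<le> \<bar>y - x\<bar> * (\<bar>f' x\<bar> + e)"
    and "0 \<le> e" "0 < r" "r \<le> d" "d \<le> 1"
  shows "(\<integral>\<^sup>+t. ennreal (1 / r) * indicator {0..} t * indicator (boundary_shell r t) x \<partial>lborel)
       \<le> ennreal (\<bar>F' x\<bar> + e) * indicator {..R+1} x"
proof -
  have "(\<integral>\<^sup>+t. ennreal (1 / r) * indicator {0..} t * indicator (boundary_shell r t) x \<partial>lborel)
      \<le> (\<integral>\<^sup>+t. ennreal (1 / r) * indicator {..R+1} x * indicator {F x..<F x + r * (\<bar>F' x\<bar> + e)} t \<partial>lborel)"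
    using boundary_shell_section[OF assms] by (intro nn_integral_mono) (auto split: split_indicator)
  also have "\<dots> = ennreal (1 / r) * indicator {..R+1} x * ennreal (r * (\<bar>F' x\<bar> + e))"
    using assms(2,3) by (subst nn_integral_cmult) auto
  also have "\<dots> = indicator {..R+1} x * (ennreal (1 / r) * ennreal (r * (\<bar>F' x\<bar> + e)))"
    by (simp only: mult_ac)
  also have "\<dots> = indicator {..R+1} x * ennreal (\<bar>F' x\<bar> + e)"
    using assms(2,3) by (simp add: ennreal_mult[symmetric])
  also have "\<dots> = ennreal (\<bar>F' x\<bar> + e) * indicator {..R+1} x"
    by (rule mult.commute)
  finally show ?thesis .
qed

lemma nn_integral_shell_quotient_le:
  assumes incr: "\<And>x y. 0 \<le> x \<Longrightarrow> x \<le> R + 1 \<Longrightarrow> 0 \<le> y \<Longrightarrow> \<bar>y - x\<bar> < d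
                    \<Longrightarrow> f y - f x \<le> \<bar>y - x\<bar> * (\<bar>f' x\<bar> + e)"
    and "0 \<le> e" "0 < r" "r \<le> d" "d \<le> 1"
  shows "(\<integral>\<^sup>+t. shell_quotient r t * indicator {0..} t \<partial>lborel)
       \<le> (\<integral>\<^sup>+x. ennreal \<bar>f' x\<bar> \<partial>\<nu>) + ennreal e * emeasure \<nu> {0..R+1}"
proof -
  note pred_boundary_shell(1)[OF \<open>0 < r\<close>, measurable]
  have "(\<integral>\<^sup>+t. shell_quotient r t * indicator {0..} t \<partial>lborel)
      = (\<integral>\<^sup>+t. ennreal (1 / r) * indicator {0..} t * emeasure \<nu> (boundary_shell r t) \<partial>lborel)"
    by (simp add: shell_quotient_def mult_ac)
  also have "\<dots> = (\<integral>\<^sup>+x. weight x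
                   * (\<integral>\<^sup>+t. ennreal (1 / r) * indicator {0..} t * indicator (boundary_shell r t) x \<partial>lborel) \<partial>lborel)"
    by (rule nn_integral_emeasure_family) (simp_all add: sets_boundary_shell)
  also have "\<dots> \<le> (\<integral>\<^sup>+x. weight x * (ennreal (\<bar>F' x\<bar> + e) * indicator {..R+1} x) \<partial>lborel)"
    by (intro nn_integral_mono mult_left_mono nn_integral_shell_section_le[OF assms]) auto
  also have "\<dots> \<le> (\<integral>\<^sup>+x. weight x * ennreal \<bar>F' x\<bar> + ennreal e * (weight x * indicator {0..R+1} x) \<partial>lborel)"
  proof (rule nn_integral_mono)
    fix x
    show "weight x * (ennreal (\<bar>F' x\<bar> + e) * indicator {..R+1} x)
        \<le> weight x * ennreal \<bar>F' x\<bar> + ennreal e * (weight x * indicator {0..R+1} x)"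
      using \<open>0 \<le> e\<close>
      by (cases "0 \<le> x"; cases "x \<le> R + 1")
         (simp_all add: weight_def ennreal_plus distrib_left distrib_right mult_ac)
  qed
  also have "\<dots> = (\<integral>\<^sup>+x. weight x * ennreal \<bar>F' x\<bar> \<partial>lborel)
                 + ennreal e * (\<integral>\<^sup>+x. weight x * indicator {0..R+1} x \<partial>lborel)"
    by (subst nn_integral_add) (auto simp: nn_integral_cmult)
  also have "\<dots> = (\<integral>\<^sup>+x. ennreal \<bar>f' x\<bar> \<partial>\<nu>) + ennreal e * emeasure \<nu> {0..R+1}"
  proof -
    have "(\<integral>\<^sup>+x. ennreal \<bar>f' x\<bar> \<partial>\<nu>) = (\<integral>\<^sup>+x. ennreal \<bar>F' x\<bar> \<partial>\<nu>)"
      by (rule nn_integral_cong) (simp add: space_nu F'_def)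
    also have "\<dots> = (\<integral>\<^sup>+x. weight x * ennreal \<bar>F' x\<bar> \<partial>lborel)"
      by (rule nn_integral_nu) measurable
    finally show ?thesis by (simp add: emeasure_nu sets_nu_iff del: atLeastAtMost_iff)
  qed
  finally show ?thesis .
qed

lemma liminf_shell_quotient_le:
  assumes "0 < e"
  shows "liminf (\<lambda>n. \<integral>\<^sup>+t. shell_quotient (inverse (real (Suc n))) t * indicator {0..} t \<partial>lborel)
       \<le> (\<integral>\<^sup>+x. ennreal \<bar>f' x\<bar> \<partial>\<nu>) + ennreal e * emeasure \<nu> {0..R+1}"
proof (rule Liminf_le)
  obtain d where "0 < d" "d \<le> 1"
    and incr: "\<And>x y. 0 \<le> x \<Longrightarrow> x \<le> R + 1 \<Longrightarrow> 0 \<le> y \<Longrightarrow> \<bar>y - x\<bar> < d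
                 \<Longrightarrow> f y - f x \<le> \<bar>y - x\<bar> * (\<bar>f' x\<bar> + e)"
    using C1_increment_bound[OF f_deriv f'_cont \<open>0 < e\<close>] by blast
  have "eventually (\<lambda>n. inverse (real (Suc n)) < d) sequentially"
    using order_tendstoD(2)[OF LIMSEQ_inverse_real_of_nat \<open>0 < d\<close>] .
  thus "eventually (\<lambda>n. (\<integral>\<^sup>+t. shell_quotient (inverse (real (Suc n))) t * indicator {0..} t \<partial>lborel)
      \<le> (\<integral>\<^sup>+x. ennreal \<bar>f' x\<bar> \<partial>\<nu>) + ennreal e * emeasure \<nu> {0..R+1}) sequentially"
    by eventually_elim (rule nn_integral_shell_quotient_le[OF incr], use \<open>0 < e\<close> \<open>d \<le> 1\<close> in auto)
qed simp

lemma coarea_inequality: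
  assumes iso: "lower_isoperimetric \<nu> J"
  shows "(\<integral>\<^sup>+t. ennreal (J (level_measure t)) * indicator {0..} t \<partial>lborel) \<le> (\<integral>\<^sup>+x. ennreal \<bar>f' x\<bar> \<partial>\<nu>)"
proof -
  have "(\<integral>\<^sup>+t. ennreal (J (level_measure t)) * indicator {0..} t \<partial>lborel)
      \<le> (\<integral>\<^sup>+t. liminf (\<lambda>n. shell_quotient (inverse (real (Suc n))) t * indicator {0..} t) \<partial>lborel)"
    using isoperimetric_le_liminf_shell_quotient[OF iso]
    by (intro nn_integral_mono) (auto split: split_indicator)
  also have "\<dots> \<le> liminf (\<lambda>n. \<integral>\<^sup>+t. shell_quotient (inverse (real (Suc n))) t * indicator {0..} t \<partial>lborel)"
  proof (rule nn_integral_liminf)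
    fix n
    have "0 < inverse (real (Suc n))" by simp
    note borel_measurable_shell_quotient[OF this, measurable]
    show "(\<lambda>t. shell_quotient (inverse (real (Suc n))) t * indicator {0..} t) \<in> borel_measurable lborel"
      by measurable
  qed
  also have "\<dots> \<le> (\<integral>\<^sup>+x. ennreal \<bar>f' x\<bar> \<partial>\<nu>)"
  proof (rule ennreal_le_epsilon)
    fix e :: real assume "0 < e"
    obtain K where K: "emeasure \<nu> {0..R+1} = ennreal K" "0 \<le> K"
      using emeasure_nu_bounded_finite[of "{0..R+1}" "R+1"]
      by (cases "emeasure \<nu> {0..R+1}") (auto simp: sets_nu_iff)
    have "liminf (\<lambda>n. \<integral>\<^sup>+t. shell_quotient (inverse (real (Suc n))) t * indicator {0..} t \<partial>lborel)
        \<le> (\<integral>\<^sup>+x. ennreal \<bar>f' x\<bar> \<partial>\<nu>) + ennreal (e / (K + 1)) * ennreal K"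
      unfolding K(1)[symmetric] by (rule liminf_shell_quotient_le) (use \<open>0 < e\<close> K(2) in simp)
    also have "ennreal (e / (K + 1)) * ennreal K = ennreal (e * (K / (K + 1)))"
      using K(2) \<open>0 < e\<close> by (simp add: ennreal_mult[symmetric])
    also have "\<dots> \<le> ennreal e"
      using K(2) \<open>0 < e\<close> by (intro ennreal_leI mult_left_le) auto
    finally show "liminf (\<lambda>n. \<integral>\<^sup>+t. shell_quotient (inverse (real (Suc n))) t * indicator {0..} t \<partial>lborel)
        \<le> (\<integral>\<^sup>+x. ennreal \<bar>f' x\<bar> \<partial>\<nu>) + ennreal e"
      by (simp add: add_left_mono)
  qed
  finally show ?thesis .
qed

subsection \<open>The Jensen term\<close>

definition jensen_density :: "(real \<Rightarrow> real) \<Rightarrow> real \<Rightarrow> real" where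
  "jensen_density I t =
     (if 0 < level_measure t then level_measure t / mass * I (mass / level_measure t) else 0)"

lemma borel_measurable_jensen_density [measurable]:
  assumes "concave_on {0..} I" "\<And>x. 0 \<le> x \<Longrightarrow> 0 \<le> I x"
  shows "jensen_density I \<in> borel_measurable borel"
proof -
  define I\<^sub>0 where "I\<^sub>0 x = I (max 0 x)" for x
  have [measurable]: "I\<^sub>0 \<in> borel_measurable borel"
    unfolding I\<^sub>0_def by (rule concave_nonneg_borel_measurable[OF assms])
  have "(\<lambda>t. if 0 < level_measure t then level_measure t / mass * I\<^sub>0 (mass / level_measure t) else 0)
      \<in> borel_measurable borel"
    by measurable
  thus ?thesis
    by (rule measurable_cong[THEN iffD1, rotated]) (simp add: jensen_density_def I\<^sub>0_def mass_nonneg)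
qed

lemma jensen_density_nonneg:
  assumes "\<And>x. 0 \<le> x \<Longrightarrow> 0 \<le> I x"
  shows "0 \<le> jensen_density I t"
  unfolding jensen_density_def using assms mass_nonneg level_measure_nonneg[of t] by simp

lemma jensen_density_le_affine:
  assumes "0 < mass" "0 \<le> k" "0 \<le> c" "\<And>v. 0 \<le> v \<Longrightarrow> I v \<le> k * v + c"
  shows "jensen_density I t \<le> k + c / mass * level_measure t"
proof (cases "0 < level_measure t")
  case True
  have "jensen_density I t = level_measure t / mass * I (mass / level_measure t)"
    unfolding jensen_density_def using True by simp
  also have "\<dots> \<le> level_measure t / mass * (k * (mass / level_measure t) + c)"
    using assms True by (intro mult_left_mono assms(4)) auto
  also have "\<dots> = k + c / mass * level_measure t"
    using True assms(1) by (simp add: field_simps)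
  finally show ?thesis .
qed (use assms level_measure_nonneg[of t] in \<open>simp add: jensen_density_def\<close>)

lemma nn_integral_jensen_density_le_affine:
  assumes "0 < mass" "0 \<le> k" "0 \<le> c" "\<And>v. 0 \<le> v \<Longrightarrow> I v \<le> k * v + c" "0 \<le> y"
  shows "(\<integral>\<^sup>+t. ennreal (jensen_density I t) * indicator {0..<y} t \<partial>lborel) \<le> ennreal (k * y + c)"
proof -
  have "(\<integral>\<^sup>+t. ennreal (jensen_density I t) * indicator {0..<y} t \<partial>lborel)
      \<le> (\<integral>\<^sup>+t. ennreal k * indicator {0..<y} t
                 + ennreal (c / mass) * (ennreal (level_measure t) * indicator {0..<y} t) \<partial>lborel)"
  proof (rule nn_integral_mono)
    fix t
    have "ennreal (jensen_density I t) \<le> ennreal (k + c / mass * level_measure t)"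
      by (rule ennreal_leI[OF jensen_density_le_affine[OF assms(1-4)]])
    also have "\<dots> = ennreal k + ennreal (c / mass) * ennreal (level_measure t)"
      using assms level_measure_nonneg[of t]
      by (simp add: ennreal_plus ennreal_mult[symmetric] del: times_divide_eq_left)
    finally show "ennreal (jensen_density I t) * indicator {0..<y} t
        \<le> ennreal k * indicator {0..<y} t + ennreal (c / mass) * (ennreal (level_measure t) * indicator {0..<y} t)"
      by (auto simp: indicator_def)
  qed
  also have "\<dots> = ennreal k * ennreal y
      + ennreal (c / mass) * (\<integral>\<^sup>+t. ennreal (level_measure t) * indicator {0..<y} t \<partial>lborel)"
    using assms(5) by (subst nn_integral_add) (auto simp: nn_integral_cmult nn_integral_cmult_indicator)
  also have "\<dots> \<le> ennreal k * ennreal y + ennreal (c / mass) * ennreal mass"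
    unfolding mass_layer_cake
    by (intro add_left_mono mult_left_mono nn_integral_mono) (auto simp: indicator_def)
  also have "\<dots> = ennreal (k * y + c)"
    using assms by (simp add: ennreal_mult[symmetric] ennreal_plus[symmetric] del: ennreal_plus)
  finally show ?thesis .
qed

lemma jensen_density_layer_bound:
  assumes conc: "concave_on {0..} I" and nonneg: "\<And>x. 0 \<le> x \<Longrightarrow> 0 \<le> I x" and "0 < mass"
  shows "(\<integral>\<^sup>+t. ennreal (jensen_density I t * level_measure t) * indicator {0..} t \<partial>lborel)
       \<le> (\<integral>\<^sup>+x. ennreal (I (f x)) \<partial>\<nu>)"
proof -
  have interval_bound: "(\<integral>\<^sup>+t. ennreal (jensen_density I t) * indicator {0..<y} t \<partial>lborel) \<le> ennreal (I y)"
    if "0 \<le> y" for y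
  proof (cases "y = 0")
    case False
    with that obtain k where "0 \<le> k" and support: "\<And>v. 0 \<le> v \<Longrightarrow> I v \<le> I y + k * (v - y)"
      using concave_nonneg_support_line[OF conc nonneg] by (metis order_le_less)
    have "0 \<le> I y - k * y" using support[of 0] nonneg[of 0] by simp
    moreover have "I v \<le> k * v + (I y - k * y)" if "0 \<le> v" for v
      using support[OF that] by (simp add: algebra_simps)
    ultimately show ?thesis
      using nn_integral_jensen_density_le_affine[OF \<open>0 < mass\<close> \<open>0 \<le> k\<close>, of "I y - k * y" I y] that by simp
  qed simp
  have "(\<integral>\<^sup>+t. ennreal (jensen_density I t * level_measure t) * indicator {0..} t \<partial>lborel)
      = (\<integral>\<^sup>+t. ennreal (jensen_density I t) * indicator {0..} t * emeasure \<nu> (superlevel t) \<partial>lborel)"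
    by (intro nn_integral_cong)
       (auto simp: indicator_def emeasure_superlevel ennreal_mult jensen_density_nonneg[OF nonneg] level_measure_nonneg)
  also have "\<dots> = (\<integral>\<^sup>+x. (\<integral>\<^sup>+t. ennreal (jensen_density I t) * indicator {0..<f x} t \<partial>lborel) \<partial>\<nu>)"
    by (rule weighted_layer_cake[symmetric]) (use conc nonneg in measurable)
  also have "\<dots> \<le> (\<integral>\<^sup>+x. ennreal (I (f x)) \<partial>\<nu>)"
    by (intro nn_integral_mono interval_bound) (simp add: space_nu f_nonneg)
  finally show ?thesis .
qed

lemma borel_measurable_concave_level_measure [measurable]:
  assumes "concave_on {0..} I" "\<And>x. 0 \<le> x \<Longrightarrow> 0 \<le> I x"
  shows "(\<lambda>t. I (level_measure t)) \<in> borel_measurable borel"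
proof -
  have "(\<lambda>t. I (max 0 (level_measure t))) \<in> borel_measurable borel"
    using measurable_compose[OF borel_measurable_level_measure concave_nonneg_borel_measurable[OF assms]] .
  thus ?thesis by (simp add: level_measure_nonneg max.absorb2)
qed

lemma level_splitting:
  assumes nonneg: "\<And>x. 0 \<le> x \<Longrightarrow> 0 \<le> I x"
    and mult: "\<And>a b. 0 \<le> a \<Longrightarrow> 0 \<le> b \<Longrightarrow> C * I (a * b) \<le> b * I a + a * I b"
    and "0 < mass"
  shows "C * I mass / mass * level_measure t \<le> jensen_density I t * level_measure t + I (level_measure t)"
proof (cases "0 < level_measure t")
  case True
  let ?m = "level_measure t"
  have "C * I mass \<le> ?m * I (mass / ?m) + mass / ?m * I ?m"
    using mult[of "mass / ?m" ?m] True \<open>0 < mass\<close> by simp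
  hence "?m / mass * (C * I mass) \<le> ?m / mass * (?m * I (mass / ?m) + mass / ?m * I ?m)"
    using True \<open>0 < mass\<close> by (intro mult_left_mono) auto
  also have "\<dots> = jensen_density I t * ?m + I ?m"
    using True \<open>0 < mass\<close> by (simp add: jensen_density_def field_simps)
  finally show ?thesis by (simp add: field_simps)
qed (use nonneg level_measure_nonneg[of t] in \<open>simp add: jensen_density_def\<close>)

lemma isoperimetric_mass_inequality:
  assumes nonneg: "\<And>x. 0 \<le> x \<Longrightarrow> 0 \<le> I x" and "0 < C"
    and mult: "\<And>a b. 0 \<le> a \<Longrightarrow> 0 \<le> b \<Longrightarrow> C * I (a * b) \<le> b * I a + a * I b"
    and conc: "concave_on {0..} I" and iso: "lower_isoperimetric \<nu> I"
  shows "ennreal (C * I mass) \<le> (\<integral>\<^sup>+x. ennreal (I (f x)) \<partial>\<nu>) + (\<integral>\<^sup>+x. ennreal \<bar>f' x\<bar> \<partial>\<nu>)"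
proof (cases "mass = 0")
  case True
  have "C * I 0 \<le> 0" using mult[of 0 0] by simp
  thus ?thesis using True by (simp add: ennreal_neg)
next
  case False
  hence "0 < mass" using mass_nonneg by simp
  have slope: "0 \<le> C * I mass / mass" using \<open>0 < C\<close> nonneg[of mass] \<open>0 < mass\<close> by simp
  have "ennreal (C * I mass) = ennreal (C * I mass / mass) * ennreal mass"
    using slope \<open>0 < mass\<close> by (simp add: ennreal_mult[symmetric])
  also have "\<dots> = (\<integral>\<^sup>+t. ennreal (C * I mass / mass) * (ennreal (level_measure t) * indicator {0..} t) \<partial>lborel)"
    unfolding mass_layer_cake by (rule nn_integral_cmult[symmetric]) measurable
  also have "\<dots> \<le> (\<integral>\<^sup>+t. ennreal (jensen_density I t * level_measure t) * indicator {0..} t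
                       + ennreal (I (level_measure t)) * indicator {0..} t \<partial>lborel)"
  proof (rule nn_integral_mono)
    fix t
    have "ennreal (C * I mass / mass) * ennreal (level_measure t) = ennreal (C * I mass / mass * level_measure t)"
      by (rule ennreal_mult[OF slope level_measure_nonneg, symmetric])
    also have "\<dots> \<le> ennreal (jensen_density I t * level_measure t) + ennreal (I (level_measure t))"
      using level_splitting[OF nonneg mult \<open>0 < mass\<close>, where t=t] jensen_density_nonneg[OF nonneg, where t=t]
        level_measure_nonneg[of t] nonneg[OF level_measure_nonneg]
      by (simp add: ennreal_plus[symmetric] ennreal_leI del: ennreal_plus)
    finally show "ennreal (C * I mass / mass) * (ennreal (level_measure t) * indicator {0..} t)
        \<le> ennreal (jensen_density I t * level_measure t) * indicator {0..} t
          + ennreal (I (level_measure t)) * indicator {0..} t"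
      by (auto simp: indicator_def mult.assoc[symmetric])
  qed
  also have "\<dots> = (\<integral>\<^sup>+t. ennreal (jensen_density I t * level_measure t) * indicator {0..} t \<partial>lborel)
                 + (\<integral>\<^sup>+t. ennreal (I (level_measure t)) * indicator {0..} t \<partial>lborel)"
    by (rule nn_integral_add) (use conc nonneg in measurable)
  also have "\<dots> \<le> (\<integral>\<^sup>+x. ennreal (I (f x)) \<partial>\<nu>) + (\<integral>\<^sup>+x. ennreal \<bar>f' x\<bar> \<partial>\<nu>)"
    by (intro add_mono jensen_density_layer_bound[OF conc nonneg \<open>0 < mass\<close>] coarea_inequality[OF iso])
  finally show ?thesis .
qed

end

theorem theorem2p3:
  fixes \<phi> I f f' :: "real \<Rightarrow> real" and C :: real
  assumes phi_nonneg: "\<And>x. 0 \<le> x \<Longrightarrow> 0 \<le> \<phi> x"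
    and phi_cont: "continuous_on {0..} \<phi>"
    and I_nonneg: "\<And>x. 0 \<le> x \<Longrightarrow> 0 \<le> I x"
    and C_pos: "C > 0"
    and I_mult: "\<And>a b. 0 \<le> a \<Longrightarrow> 0 \<le> b \<Longrightarrow> C * I (a * b) \<le> b * I a + a * I b"
    and I_concave: "concave_on {0..} I"
    and I_iso: "lower_isoperimetric (nu_measure \<phi>) I"
    and f_nonneg: "\<And>x. 0 \<le> x \<Longrightarrow> 0 \<le> f x"
    and f_deriv: "\<And>x. 0 \<le> x \<Longrightarrow> (f has_real_derivative f' x) (at x within {0..})"
    and f'_cont: "continuous_on {0..} f'"
    and f_supp: "\<exists>R. \<forall>x\<ge>R. f x = 0"
  shows "ennreal (C * I (integral\<^sup>L (nu_measure \<phi>) f))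
           \<le> (\<integral>\<^sup>+ x. ennreal (I (f x)) \<partial>nu_measure \<phi>)
             + (\<integral>\<^sup>+ x. ennreal \<bar>f' x\<bar> \<partial>nu_measure \<phi>)"
proof -
  obtain R where "\<forall>x\<ge>R. f x = 0" using f_supp by blast
  then interpret half_line_profile \<phi> f f' R
    using phi_cont f_nonneg f_deriv f'_cont by unfold_locales auto
  show ?thesis
    using isoperimetric_mass_inequality[OF I_nonneg C_pos I_mult I_concave I_iso] by (simp add: mass_def)
qed

end
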